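(* Let $G$ be a connected ribbon graph. Then (1) $P_{\langle\delta\rangle}(G,1)=P_{\langle\tau\delta\tau\rangle}(G,1)=2^{e(G)}$, $P_{\langle\delta\tau\rangle}(G,1)=3^{e(G)}$, and $P_{\langle\delta,\tau\rangle}(G,1)=6^{e(G)}$; (2) for each $\bullet\in\{\langle\delta\rangle,\langle\delta\tau\rangle,\langle\tau\delta\tau\rangle,\langle\delta,\tau\rangle\}$ and every $H\in\mathrm{Orb}_\bullet(G)$, $P_\bullet(G,x)=P_\bullet(H,x)$; (3) for each $\bullet\in\{\langle\delta\rangle,\langle\delta\tau\rangle,\langle\tau\delta\tau\rangle,\langle\delta,\tau\rangle\}$, the polynomial $P_\bullet(G,x)$ has minimum degree $1$ and is interpolating, i.e. if its maximum degree is $M$ then the coefficient of $x^k$ is nonzero for every $1\le k\le M$.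
   Context: A ribbon graph $G=(V(G),E(G))$ is a (orientable or non-orientable) surface with boundary, represented as the union of a set $V(G)$ of vertex discs and a set $E(G)$ of edge discs (ribbons) such that vertices and edges intersect in disjoint line segments, each such segment lies on the boundary of exactly one vertex and exactly one edge, and every edge contains exactly two such segments. $v(G)$, $e(G)$ denote the numbers of vertices and edges. For $A\subseteq E(G)$, the partial dual $G^{\delta(A)}$ is obtained by gluing a disc along each boundary component of the spanning ribbon subgraph $(V(G),A)$ (these discs become the vertex discs), removing the interiors of the original vertex discs, and keeping the edge ribbons. The partial Petrial $G^{\tau(A)}$ adds a half-twist to each edge in $A$. For a word $w=w_1\cdots w_n$ over $\{\delta,\tau\}$, $G^{w(A)}=(\cdots(G^{w_n(A)})^{w_{n-1}(A)}\cdots)^{w_1(A)}$ (rightmost letter applied first), $G^{1(A)}=G$, and $G^{\xi(A)\pi(B)}=(G^{\xi(A)})^{\pi(B)}$. Orbits: $\mathrm{Orb}_{\langle\delta\rangle}(G)=\{G^{\delta(A)}:A\subseteq E(G)\}$, $\mathrm{Orb}_{\langle\tau\delta\tau\rangle}(G)=\{G^{\tau\delta\tau(A)}:A\subseteq E(G)\}$, $\mathrm{Orb}_{\langle\delta\tau\rangle}(G)=\{G^{1(A_1)\tau\delta(A_2)\delta\tau(A_3)}\}$ over ordered partitions $(A_1,A_2,A_3)$ of $E(G)$ into pairwise disjoint possibly empty parts, and $\mathrm{Orb}_{\langle\delta,\tau\rangle}(G)=\{G^{1(A_1)\delta(A_2)\tau(A_3)\tau\delta(A_4)\delta\tau(A_5)\tau\delta\tau(A_6)}\}$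 over ordered partitions $(A_1,\dots,A_6)$ of $E(G)$. Vertex polynomials (sums over the same index sets, counted with multiplicity): $P_{\langle\delta\rangle}(G,x)=\sum_{A\subseteq E(G)}x^{v(G^{\delta(A)})}$; $P_{\langle\tau\delta\tau\rangle}(G,x)=\sum_{A\subseteq E(G)}x^{v(G^{\tau\delta\tau(A)})}$; $P_{\langle\delta\tau\rangle}(G,x)=\sum_{(A_1,A_2,A_3)}x^{v(G^{1(A_1)\tau\delta(A_2)\delta\tau(A_3)})}$; $P_{\langle\delta,\tau\rangle}(G,x)=\sum_{(A_1,\dots,A_6)}x^{v(G^{1(A_1)\delta(A_2)\tau(A_3)\tau\delta(A_4)\delta\tau(A_5)\tau\delta\tau(A_6)})}$. *)

theory Defs
  imports Main "HOL-Library.FuncSet" "HOL-Computational_Algebra.Polynomial"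
begin

text \<open>Ribbon graphs encoded combinatorially (graph-encoded maps).
Each edge ribbon is a rectangle with four corners (flags). Three fixed-point-free
involutions on the flags:
  sg: joins the two corners of the same edge--vertex attaching segment;
  lg: joins the two corners on the same long side (edge boundary arc) of the ribbon;
  nu: joins consecutive corners along a vertex-disc boundary arc.
Vertices of positive degree are the orbits of the group generated by sg and nu;
isolated vertices (vertex discs meeting no edge) are counted separately by iso.\<close>

record 'a ribbon =
  flags :: "'a set"
  iso :: nat
  sg :: "'a \<Rightarrow> 'a"
  lg :: "'a \<Rightarrow> 'a"
  nu :: "'a \<Rightarrow> 'a"

definition fpf_involution :: "'a set \<Rightarrow> ('a \<Rightarrow> 'a) \<Rightarrow> bool" where
  "fpf_involution F p \<longleftrightarrow> (\<forall>f\<in>F. p f \<in> F \<and> p (p f) = f \<and> p f \<noteq> f)"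

definition ribbon_graph :: "'a ribbon \<Rightarrow> bool" where
  "ribbon_graph G \<longleftrightarrow> finite (flags G)
     \<and> fpf_involution (flags G) (sg G) \<and> fpf_involution (flags G) (lg G)
     \<and> fpf_involution (flags G) (nu G)
     \<and> (\<forall>f\<in>flags G. sg G (lg G f) = lg G (sg G f) \<and> sg G f \<noteq> lg G f)"

definition edge_of :: "'a ribbon \<Rightarrow> 'a \<Rightarrow> 'a set" where
  "edge_of G f = {f, sg G f, lg G f, sg G (lg G f)}"

definition edges :: "'a ribbon \<Rightarrow> 'a set set" where
  "edges G = edge_of G ` flags G"

definition vrel :: "'a ribbon \<Rightarrow> ('a \<times> 'a) set" where
  "vrel G = {(f, sg G f) | f. f \<in> flags G} \<union> {(f, nu G f) | f. f \<in> flags G}"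

definition vertices :: "'a ribbon \<Rightarrow> 'a set set" where
  "vertices G = {(vrel G)\<^sup>* `` {f} | f. f \<in> flags G}"

definition nv :: "'a ribbon \<Rightarrow> nat" where
  "nv G = iso G + card (vertices G)"

definition ne :: "'a ribbon \<Rightarrow> nat" where
  "ne G = card (edges G)"

definition allrel :: "'a ribbon \<Rightarrow> ('a \<times> 'a) set" where
  "allrel G = vrel G \<union> {(f, lg G f) | f. f \<in> flags G}"

definition connected_rg :: "'a ribbon \<Rightarrow> bool" where
  "connected_rg G \<longleftrightarrow> (flags G = {} \<and> iso G = 1)
     \<or> (iso G = 0 \<and> flags G \<noteq> {} \<and> (\<forall>f\<in>flags G. \<forall>g\<in>flags G. (f, g) \<in> (allrel G)\<^sup>*))"

definition pdual :: "'a set set \<Rightarrow> 'a ribbon \<Rightarrow> 'a ribbon" where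
  "pdual A G = G\<lparr> sg := (\<lambda>f. if edge_of G f \<in> A then lg G f else sg G f),
                  lg := (\<lambda>f. if edge_of G f \<in> A then sg G f else lg G f) \<rparr>"

text \<open>Partial Petrial: a half-twist in each edge of A makes the long sides cross.\<close>
definition ppetrial :: "'a set set \<Rightarrow> 'a ribbon \<Rightarrow> 'a ribbon" where
  "ppetrial A G = G\<lparr> lg := (\<lambda>f. if edge_of G f \<in> A then sg G (lg G f) else lg G f) \<rparr>"

datatype rop = D | T

fun apply_op :: "rop \<Rightarrow> 'a set set \<Rightarrow> 'a ribbon \<Rightarrow> 'a ribbon" where
  "apply_op D A G = pdual A G"
| "apply_op T A G = ppetrial A G"

text \<open>G^{w(A)} for w = w1...wn: the rightmost letter is applied first.\<close>
fun apply_word :: "rop list \<Rightarrow> 'a set set \<Rightarrow> 'a ribbon \<Rightarrow> 'a ribbon" where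
  "apply_word [] A G = G"
| "apply_word (w # ws) A G = apply_op w A (apply_word ws A G)"

text \<open>G^{xi1(A1) xi2(A2) ...} = ((G^{xi1(A1)})^{xi2(A2)})...\<close>
fun apply_seq :: "(rop list \<times> 'a set set) list \<Rightarrow> 'a ribbon \<Rightarrow> 'a ribbon" where
  "apply_seq [] G = G"
| "apply_seq ((w, A) # rest) G = apply_seq rest (apply_word w A G)"

text \<open>Ordered partitions of E(G) into n possibly empty parts are encoded by
functions p : E(G) \<rightarrow> {0..<n}; part i is the preimage of i.\<close>
definition opartitions :: "'a ribbon \<Rightarrow> nat \<Rightarrow> ('a set \<Rightarrow> nat) set" where
  "opartitions G n = PiE (edges G) (\<lambda>_. {..<n})"

definition part :: "'a ribbon \<Rightarrow> ('a set \<Rightarrow> nat) \<Rightarrow> nat \<Rightarrow> 'a set set" where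
  "part G p i = {e \<in> edges G. p e = i}"

definition G_dt :: "'a ribbon \<Rightarrow> ('a set \<Rightarrow> nat) \<Rightarrow> 'a ribbon" where
  "G_dt G p = apply_seq [([], part G p 0), ([T, D], part G p 1), ([D, T], part G p 2)] G"

definition G_dT :: "'a ribbon \<Rightarrow> ('a set \<Rightarrow> nat) \<Rightarrow> 'a ribbon" where
  "G_dT G p = apply_seq [([], part G p 0), ([D], part G p 1), ([T], part G p 2),
                         ([T, D], part G p 3), ([D, T], part G p 4), ([T, D, T], part G p 5)] G"

definition Orb_d :: "'a ribbon \<Rightarrow> 'a ribbon set" where
  "Orb_d G = {apply_word [D] A G | A. A \<subseteq> edges G}"

definition Orb_tdt :: "'a ribbon \<Rightarrow> 'a ribbon set" where
  "Orb_tdt G = {apply_word [T, D, T] A G | A. A \<subseteq> edges G}"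

definition Orb_dt :: "'a ribbon \<Rightarrow> 'a ribbon set" where
  "Orb_dt G = G_dt G ` opartitions G 3"

definition Orb_dT :: "'a ribbon \<Rightarrow> 'a ribbon set" where
  "Orb_dT G = G_dT G ` opartitions G 6"

definition P_d :: "'a ribbon \<Rightarrow> int poly" where
  "P_d G = (\<Sum>A\<in>Pow (edges G). monom 1 (nv (apply_word [D] A G)))"

definition P_tdt :: "'a ribbon \<Rightarrow> int poly" where
  "P_tdt G = (\<Sum>A\<in>Pow (edges G). monom 1 (nv (apply_word [T, D, T] A G)))"

definition P_dt :: "'a ribbon \<Rightarrow> int poly" where
  "P_dt G = (\<Sum>p\<in>opartitions G 3. monom 1 (nv (G_dt G p)))"

definition P_dT :: "'a ribbon \<Rightarrow> int poly" where
  "P_dT G = (\<Sum>p\<in>opartitions G 6. monom 1 (nv (G_dT G p)))"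

definition mindeg1_interpolating :: "int poly \<Rightarrow> bool" where
  "mindeg1_interpolating P \<longleftrightarrow> coeff P 0 = 0 \<and> coeff P 1 \<noteq> 0
     \<and> (\<forall>k. 1 \<le> k \<and> k \<le> degree P \<longrightarrow> coeff P k \<noteq> 0)"

end

theory Submission
  imports Defs "HOL-Library.Z2" "HOL-Library.Disjoint_Sets"
begin

(* Every ribbon graph H obtained from G by partial duals and partial Petrials has the flags, the
   isolated vertices and the map nu of G, and on each edge two distinct symmetries of the edge
   rectangle of G (sg, lg or the half-turn sg lg) act as its sg and lg. Recording these ordered
   pairs as a frame per edge, delta swaps the pair and tau replaces its second entry by the product
   of both. Each vertex polynomial of H is then a sum of x^(number of vertices) over all frame
   assignments with values in the orbit of (sg, lg) under the relevant group, a sum that depends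
   only on G; this gives the invariance on orbits and the values at 1.

   The vertices are the orbits of two fixed-point-free involutions, the framed sg and nu. If the
   corners of an edge lie in two different vertices, changing the first entry of its frame merges
   these two vertices and leaves the others alone, because an arc of a cycle of two involutions is
   never a bridge. In a connected graph with at least two vertices such an edge exists, so the
   attained vertex numbers form an interval starting at 1. *)

section \<open>Cycles of two involutions\<close>

definition arcs :: "'a set \<Rightarrow> ('a \<Rightarrow> 'a) \<Rightarrow> ('a \<times> 'a) set" where
  "arcs F p = {(x, p x) | x. x \<in> F}"

lemma arcs_iff [simp]: "(x, y) \<in> arcs F p \<longleftrightarrow> x \<in> F \<and> y = p x"
  by (auto simp: arcs_def)

lemma arcs_cong: "(\<And>x. x \<in> F \<Longrightarrow> p x = q x) \<Longrightarrow> arcs F p = arcs F q"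
  by (auto simp: arcs_def)

lemma sym_arcs: "fpf_involution F p \<Longrightarrow> sym (arcs F p)"
  by (auto simp: sym_def fpf_involution_def)

lemma equiv_rtrancl: "sym V \<Longrightarrow> equiv UNIV (V\<^sup>*)"
  by (simp add: equiv_def refl_rtrancl sym_rtrancl trans_rtrancl)

lemma quotient_eq_image: "A // r = (\<lambda>x. r `` {x}) ` A"
  by (auto simp: quotient_def)

lemma even_card_fpf_involution:
  assumes "fpf_involution X p"
  shows "even (card X)"
proof -
  have "(\<Sum>x\<in>X. 1 :: bit) = 0"
    by (rule sum_involution_eq_0[where h = p]) (use assms in \<open>auto simp: fpf_involution_def\<close>)
  then have "even (of_nat (card X) :: bit)"
    by simp
  then show ?thesis
    by (simp only: even_of_nat)
qed

(* If s a were not reachable, the class A of a would be closed under n, so card A is even, while s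
   pairs off the elements of A - {a}, so card A is odd. *)
lemma involution_arc_not_bridge:
  assumes "finite F" and s: "fpf_involution F s" and n: "fpf_involution F n" and "a \<in> F"
    and B: "B \<inter> (arcs F s \<union> arcs F n)\<^sup>* `` {a} \<subseteq> {a, s a}"
  shows "(a, s a) \<in> (arcs (F - B) s \<union> arcs F n)\<^sup>*"
proof (rule ccontr)
  define V0 where "V0 = arcs (F - B) s \<union> arcs F n"
  define A where "A = V0\<^sup>* `` {a}"
  assume "(a, s a) \<notin> (arcs (F - B) s \<union> arcs F n)\<^sup>*"
  then have "s a \<notin> A"
    by (simp add: A_def V0_def)
  have "y \<in> F" if "(a, y) \<in> V0\<^sup>*" for y
    using that by induction (use \<open>a \<in> F\<close> s n in \<open>auto simp: V0_def fpf_involution_def\<close>)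
  then have AF: "A \<subseteq> F"
    by (auto simp: A_def)
  have "A \<subseteq> (arcs F s \<union> arcs F n)\<^sup>* `` {a}"
    unfolding A_def V0_def by (intro Image_mono rtrancl_mono) auto
  then have A_B: "x \<in> A \<Longrightarrow> x \<in> B \<Longrightarrow> x = a \<or> x = s a" for x
    using B by blast
  have step: "(x, y) \<in> V0 \<Longrightarrow> x \<in> A \<Longrightarrow> y \<in> A" for x y
    by (auto simp: A_def intro: rtrancl_into_rtrancl)
  have "fpf_involution A n"
    using AF n step by (auto simp: fpf_involution_def V0_def)
  moreover have "fpf_involution (A - {a}) s"
    unfolding fpf_involution_def
  proof
    fix x assume x: "x \<in> A - {a}"
    then have "x \<noteq> s a" "x \<notin> B"
      using \<open>s a \<notin> A\<close> A_B by auto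
    then show "s x \<in> A - {a} \<and> s (s x) = x \<and> s x \<noteq> x"
      using x step[of x "s x"] s AF by (auto simp: V0_def fpf_involution_def)
  qed
  ultimately have "even (card A)" "even (card (A - {a}))"
    using even_card_fpf_involution by blast+
  moreover have "a \<in> A" "finite A"
    using AF \<open>finite F\<close> finite_subset by (auto simp: A_def)
  ultimately show False
    by (simp add: card_gt_0_iff)
qed

lemma rtrancl_join_classes:
  assumes "sym V" "sym W" "V \<subseteq> W"
    and W: "W \<subseteq> V\<^sup>* \<union> K \<times> K"
    and K: "K = V\<^sup>* `` {a} \<union> V\<^sup>* `` {c}"
    and "(x, y) \<in> W" "(a, x) \<in> V\<^sup>*" "(c, y) \<in> V\<^sup>*"
  shows "W\<^sup>* = V\<^sup>* \<union> K \<times> K"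
proof
  have sym: "(v, u) \<in> V\<^sup>*" if "(u, v) \<in> V\<^sup>*" for u v
    using sym_rtrancl[OF \<open>sym V\<close>] that by (rule symD)
  have closed: "v \<in> K" if "(u, v) \<in> V\<^sup>*" "u \<in> K" for u v
    using that unfolding K by (auto intro: rtrancl_trans)
  show "W\<^sup>* \<subseteq> V\<^sup>* \<union> K \<times> K"
  proof (rule subrelI)
    fix u v assume "(u, v) \<in> W\<^sup>*"
    then show "(u, v) \<in> V\<^sup>* \<union> K \<times> K"
    proof induction
      case (step v w)
      from \<open>(v, w) \<in> W\<close> W have "(v, w) \<in> V\<^sup>* \<or> v \<in> K \<and> w \<in> K"
        by blast
      with step.IH show ?case
        using closed sym by (blast intro: rtrancl_trans)
    qed simp
  qed
  have "V\<^sup>* \<subseteq> W\<^sup>*"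
    using \<open>V \<subseteq> W\<close> by (rule rtrancl_mono)
  then have "(a, x) \<in> W\<^sup>*" "(y, c) \<in> W\<^sup>*"
    using \<open>(a, x) \<in> V\<^sup>*\<close> sym[OF \<open>(c, y) \<in> V\<^sup>*\<close>] by auto
  then have "(a, c) \<in> W\<^sup>*"
    using \<open>(x, y) \<in> W\<close> by (meson rtrancl_into_rtrancl rtrancl_trans)
  then have a_K: "(a, u) \<in> W\<^sup>*" if "u \<in> K" for u
    using that \<open>V\<^sup>* \<subseteq> W\<^sup>*\<close> unfolding K by (auto intro: rtrancl_trans)
  have "(u, v) \<in> W\<^sup>*" if "u \<in> K" "v \<in> K" for u v
    using symD[OF sym_rtrancl[OF \<open>sym W\<close>] a_K[OF \<open>u \<in> K\<close>]] a_K[OF \<open>v \<in> K\<close>]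
    by (rule rtrancl_trans)
  then show "V\<^sup>* \<union> K \<times> K \<subseteq> W\<^sup>*"
    using \<open>V\<^sup>* \<subseteq> W\<^sup>*\<close> by blast
qed

lemma card_quotient_join_classes:
  assumes R: "equiv UNIV R" and "finite F" "a \<in> F" "c \<in> F" "(a, c) \<notin> R"
    and K: "K = R `` {a} \<union> R `` {c}"
  shows "Suc (card (F // (R \<union> K \<times> K))) = card (F // R)"
proof -
  have class_K: "R `` {x} = R `` {a} \<or> R `` {x} = R `` {c}" if "x \<in> K" for x
    using that equiv_class_eq[OF R] unfolding K by blast
  have self: "x \<in> R `` {x}" for x
    using equiv_class_self[OF R] by blast
  have join_class: "(R \<union> K \<times> K) `` {x} = (if x \<in> K then K else R `` {x})" for x
    using class_K[of x] K by auto
  define M where "M = (\<lambda>x. R `` {x}) ` (F - K)"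
  have "F // (R \<union> K \<times> K) = (\<lambda>x. if x \<in> K then K else R `` {x}) ` F"
    by (simp add: quotient_eq_image join_class)
  also have "\<dots> = insert K M"
    using \<open>a \<in> F\<close> K self by (auto simp: M_def)
  finally have "F // (R \<union> K \<times> K) = insert K M" .
  moreover have "F // R = insert (R `` {a}) (insert (R `` {c}) M)"
    using \<open>a \<in> F\<close> \<open>c \<in> F\<close> class_K K self by (auto simp: quotient_eq_image M_def)
  moreover have "K \<notin> M" "R `` {a} \<notin> M" "R `` {c} \<notin> M"
    using K self equivE[OF R] by (auto simp: M_def dest: symD)
  moreover have "R `` {a} \<noteq> R `` {c}"
    using \<open>(a, c) \<notin> R\<close> eq_equiv_class_iff[OF R] by blast
  moreover have "finite M"
    using \<open>finite F\<close> by (simp add: M_def)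
  ultimately show ?thesis
    by simp
qed

lemma fpf_involution_Diff: "fpf_involution F s \<Longrightarrow> s ` B \<subseteq> B \<Longrightarrow> fpf_involution (F - B) s"
  unfolding fpf_involution_def by (metis DiffD1 DiffD2 DiffI image_subset_iff)

lemma rtrancl_arcs_remove_pairs:
  assumes "finite F" and s: "fpf_involution F s" and n: "fpf_involution F n" and "a \<in> F" "c \<in> F"
    and apart: "(a, c) \<notin> (arcs F s \<union> arcs F n)\<^sup>*"
  shows "(arcs (F - {a, s a, c, s c}) s \<union> arcs F n)\<^sup>* = (arcs F s \<union> arcs F n)\<^sup>*"
proof -
  define B where "B = {a, s a, c, s c}"
  define V where "V = arcs F s \<union> arcs F n"
  define V0 where "V0 = arcs (F - B) s \<union> arcs F n"
  have ss: "s (s a) = a" "s (s c) = c"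
    using s \<open>a \<in> F\<close> \<open>c \<in> F\<close> by (auto simp: fpf_involution_def)
  then have "sym V0"
    using fpf_involution_Diff[OF s, of B] n by (auto simp: V0_def B_def sym_arcs sym_Un)
  have "(s a, a) \<in> V" "(s c, c) \<in> V"
    using s ss \<open>a \<in> F\<close> \<open>c \<in> F\<close> by (auto simp: V_def fpf_involution_def)
  moreover have "sym (V\<^sup>*)"
    using s n by (simp add: V_def sym_arcs sym_Un sym_rtrancl)
  ultimately have "(a, s c) \<notin> V\<^sup>*" "(c, a) \<notin> V\<^sup>*" "(c, s a) \<notin> V\<^sup>*"
    using apart unfolding V_def[symmetric] by (blast intro: rtrancl_into_rtrancl dest: symD)+
  then have "B \<inter> V\<^sup>* `` {a} \<subseteq> {a, s a}" "B \<inter> V\<^sup>* `` {c} \<subseteq> {c, s c}"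
    using apart by (auto simp: B_def V_def)
  then have "(a, s a) \<in> V0\<^sup>*" "(c, s c) \<in> V0\<^sup>*"
    using involution_arc_not_bridge[OF \<open>finite F\<close> s n] \<open>a \<in> F\<close> \<open>c \<in> F\<close>
    unfolding V_def V0_def by blast+
  then have "(s a, a) \<in> V0\<^sup>*" "(s c, c) \<in> V0\<^sup>*"
    using sym_rtrancl[OF \<open>sym V0\<close>] by (auto dest: symD)
  have "V \<subseteq> V0\<^sup>*"
  proof
    fix p assume "p \<in> V"
    then consider x where "p = (x, s x)" "x \<in> B" | "p \<in> V0"
      by (auto simp: V_def V0_def arcs_def)
    then show "p \<in> V0\<^sup>*"
      using \<open>(a, s a) \<in> V0\<^sup>*\<close> \<open>(c, s c) \<in> V0\<^sup>*\<close> \<open>(s a, a) \<in> V0\<^sup>*\<close>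
        \<open>(s c, c) \<in> V0\<^sup>*\<close> ss
      by cases (auto simp: B_def)
  qed
  moreover have "V0 \<subseteq> V"
    by (auto simp: V0_def V_def)
  ultimately have "V\<^sup>* = V0\<^sup>*"
    by (simp add: rtrancl_subset)
  then show ?thesis
    by (simp add: B_def V0_def V_def)
qed

lemma card_quotient_reconnect:
  assumes "finite F" and s: "fpf_involution F s" and s': "fpf_involution F s'"
    and n: "fpf_involution F n" and "a \<in> F" "c \<in> F"
    and apart: "(a, c) \<notin> (arcs F s \<union> arcs F n)\<^sup>*"
    and B: "B = {a, s a, c, s c}" and "s' a \<in> {c, s c}" "s' ` B \<subseteq> B"
    and outside_B: "\<forall>x\<in>F - B. s' x = s x"
  shows "Suc (card (F // (arcs F s' \<union> arcs F n)\<^sup>*)) = card (F // (arcs F s \<union> arcs F n)\<^sup>*)"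
proof -
  define V0 where "V0 = arcs (F - B) s \<union> arcs F n"
  define W where "W = arcs F s' \<union> arcs F n"
  define K where "K = V0\<^sup>* `` {a} \<union> V0\<^sup>* `` {c}"
  have V0: "V0\<^sup>* = (arcs F s \<union> arcs F n)\<^sup>*"
    unfolding V0_def B
    by (rule rtrancl_arcs_remove_pairs[OF \<open>finite F\<close> s n \<open>a \<in> F\<close> \<open>c \<in> F\<close> apart])
  have "s ` B \<subseteq> B"
    using s \<open>a \<in> F\<close> \<open>c \<in> F\<close> by (auto simp: B fpf_involution_def)
  then have "sym V0"
    using fpf_involution_Diff[OF s] n by (simp add: V0_def sym_arcs sym_Un)
  have "sym W"
    using s' n by (simp add: W_def sym_arcs sym_Un)
  have "V0 \<subseteq> W"
    using outside_B by (auto simp: V0_def W_def)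
  have "(a, s a) \<in> V0\<^sup>*" "(c, s c) \<in> V0\<^sup>*"
    unfolding V0 using \<open>a \<in> F\<close> \<open>c \<in> F\<close> by auto
  then have "B \<subseteq> K"
    by (auto simp: B K_def)
  have W_K: "W \<subseteq> V0\<^sup>* \<union> K \<times> K"
  proof
    fix p assume "p \<in> W"
    then consider x where "p = (x, s' x)" "x \<in> B" | "p \<in> V0"
      using outside_B by (auto simp: W_def V0_def arcs_def)
    then show "p \<in> V0\<^sup>* \<union> K \<times> K"
      using \<open>B \<subseteq> K\<close> \<open>s' ` B \<subseteq> B\<close> by cases auto
  qed
  have "(a, s' a) \<in> W" "(c, s' a) \<in> V0\<^sup>*"
    using \<open>a \<in> F\<close> \<open>s' a \<in> {c, s c}\<close> \<open>(c, s c) \<in> V0\<^sup>*\<close> by (auto simp: W_def)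
  then have "W\<^sup>* = V0\<^sup>* \<union> K \<times> K"
    using rtrancl_join_classes[OF \<open>sym V0\<close> \<open>sym W\<close> \<open>V0 \<subseteq> W\<close> W_K K_def _ rtrancl_refl]
    by blast
  moreover have "Suc (card (F // (V0\<^sup>* \<union> K \<times> K))) = card (F // V0\<^sup>*)"
    using apart unfolding V0[symmetric]
    by (rule card_quotient_join_classes[OF equiv_rtrancl[OF \<open>sym V0\<close>] \<open>finite F\<close>
          \<open>a \<in> F\<close> \<open>c \<in> F\<close> _ K_def])
  ultimately show ?thesis
    by (simp add: V0 W_def)
qed

section \<open>Sums of monomials over product sets\<close>

lemma sum_PiE_pointwise_bij:
  assumes bij: "\<And>e. e \<in> E \<Longrightarrow> bij_betw (\<phi> e) I S"
    and cong: "\<And>c c'. (\<And>e. e \<in> E \<Longrightarrow> c e = c' e) \<Longrightarrow> g c = g c'"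
  shows "(\<Sum>p\<in>PiE E (\<lambda>_. I). g (\<lambda>e. \<phi> e (p e))) = (\<Sum>c\<in>PiE E (\<lambda>_. S). g c)"
proof -
  have [simp]: "\<phi> e x \<in> S" "inv_into I (\<phi> e) (\<phi> e x) = x"
    if "e \<in> E" "x \<in> I" for e x
    using bij[OF that(1)] that(2) by (auto simp: bij_betwE bij_betw_inv_into_left)
  have [simp]: "inv_into I (\<phi> e) y \<in> I" "\<phi> e (inv_into I (\<phi> e) y) = y"
    if "e \<in> E" "y \<in> S" for e y
    using bij[OF that(1)] that(2) by (auto simp: bij_betw_def inv_into_into f_inv_into_f)
  show ?thesis
    by (rule sum.reindex_bij_witness[where j = "\<lambda>p. restrict (\<lambda>e. \<phi> e (p e)) E"
          and i = "\<lambda>c. restrict (\<lambda>e. inv_into I (\<phi> e) (c e)) E"])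
      (auto simp: fun_eq_iff PiE_iff extensional_def intro!: cong)
qed

lemma sum_Pow_pointwise_bij:
  assumes bij: "\<And>e. e \<in> E \<Longrightarrow> bij_betw (\<phi> e) UNIV S"
    and cong: "\<And>c c'. (\<And>e. e \<in> E \<Longrightarrow> c e = c' e) \<Longrightarrow> g c = g c'"
  shows "(\<Sum>A\<in>Pow E. g (\<lambda>e. \<phi> e (e \<in> A))) = (\<Sum>c\<in>PiE E (\<lambda>_. S). g c)"
proof -
  have [simp]: "\<phi> e b \<in> S" "inv (\<phi> e) (\<phi> e b) = b" if "e \<in> E" for e b
    using bij[OF that] by (auto simp: bij_betwE bij_betw_inv_into_left)
  have [simp]: "\<phi> e (inv (\<phi> e) y) = y" if "e \<in> E" "y \<in> S" for e y
    using bij[OF that(1)] that(2) by (simp add: bij_betw_inv_into_right)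
  show ?thesis
    by (rule sum.reindex_bij_witness[where j = "\<lambda>A. restrict (\<lambda>e. \<phi> e (e \<in> A)) E"
          and i = "\<lambda>c. {e \<in> E. inv (\<phi> e) (c e)}"])
      (auto simp: fun_eq_iff PiE_iff extensional_def intro!: cong)
qed

lemma poly_sum_monom_one: "poly (\<Sum>x\<in>I. monom 1 (k x)) 1 = int (card I)"
  by (simp add: poly_sum poly_monom)

lemma mindeg1_interpolating_sum_monom:
  fixes d :: "'b \<Rightarrow> nat"
  assumes "finite C" "C \<noteq> {}" and pos: "\<And>c. c \<in> C \<Longrightarrow> 1 \<le> d c"
    and down: "\<And>c. c \<in> C \<Longrightarrow> 1 < d c \<Longrightarrow> \<exists>c'\<in>C. d c' = d c - 1"
  shows "mindeg1_interpolating (\<Sum>c\<in>C. monom 1 (d c))"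
proof -
  define P :: "int poly" where "P = (\<Sum>c\<in>C. monom 1 (d c))"
  have "coeff P k = int (card {c \<in> C. d c = k})" for k
    using \<open>finite C\<close> by (simp add: P_def coeff_sum sum.inter_filter[symmetric])
  then have coeff_P: "coeff P k \<noteq> 0 \<longleftrightarrow> k \<in> d ` C" for k
    using \<open>finite C\<close> by auto
  have interval: "k \<in> d ` C" if "m \<in> d ` C" "1 \<le> k" "k \<le> m" for k m
    using \<open>k \<le> m\<close> \<open>m \<in> d ` C\<close>
  proof (induction rule: inc_induct)
    case (step n)
    then obtain c where "c \<in> C" "d c = Suc n"
      by force
    then show ?case
      using down[of c] step.hyps(1) \<open>1 \<le> k\<close> by force
  qed
  obtain c0 where "c0 \<in> C"
    using \<open>C \<noteq> {}\<close> by blast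
  then have "P \<noteq> 0"
    using coeff_P by (metis coeff_0 imageI)
  then have "degree P \<in> d ` C"
    using coeff_P[of "degree P"] by simp
  moreover have "0 \<notin> d ` C"
    using pos by fastforce
  ultimately show ?thesis
    unfolding mindeg1_interpolating_def P_def[symmetric]
    using coeff_P interval pos by fastforce
qed

section \<open>Frames\<close>

datatype rect_sym = Seg | Side | Rot

type_synonym frame = "rect_sym \<times> rect_sym"
type_synonym 'a framing = "'a set \<Rightarrow> frame"

lemma UNIV_rect_sym: "UNIV = {Seg, Side, Rot}"
  by (auto intro: rect_sym.exhaust)

lemma finite_frame_set: "finite (S :: frame set)"
proof -
  have "finite (UNIV :: rect_sym set)"
    by (simp add: UNIV_rect_sym)
  then show ?thesis
    using finite_Prod_UNIV finite_subset subset_UNIV by metis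
qed

(* For i \<noteq> j this is the product of i and j in the Klein four-group of the rectangle. *)
fun third :: "rect_sym \<Rightarrow> rect_sym \<Rightarrow> rect_sym" where
  "third Seg Side = Rot" | "third Side Seg = Rot" | "third Seg Seg = Seg"
| "third Seg Rot = Side" | "third Rot Seg = Side" | "third Side Side = Side"
| "third Side Rot = Seg" | "third Rot Side = Seg" | "third Rot Rot = Rot"

lemma third_neq: "i \<noteq> j \<Longrightarrow> third i j \<noteq> i \<and> third i j \<noteq> j"
  by (cases i; cases j) simp_all

lemma insert_third: "i \<noteq> j \<Longrightarrow> {i, j, third i j} = UNIV"
  by (cases i; cases j) (auto intro: rect_sym.exhaust)

fun rect_act :: "'a ribbon \<Rightarrow> rect_sym \<Rightarrow> 'a \<Rightarrow> 'a" where
  "rect_act G Seg f = sg G f"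
| "rect_act G Side f = lg G f"
| "rect_act G Rot f = sg G (lg G f)"

lemma edge_of_eq_range: "edge_of G f = insert f (range (\<lambda>k. rect_act G k f))"
  by (simp add: edge_of_def UNIV_rect_sym)

lemma edge_of_in_edges: "f \<in> flags G \<Longrightarrow> edge_of G f \<in> edges G"
  by (simp add: edges_def)

definition frames :: "frame set" where
  "frames = {(i, j). i \<noteq> j}"

lemma frames_eq:
  "frames = {(Seg, Side), (Seg, Rot), (Side, Seg), (Side, Rot), (Rot, Seg), (Rot, Side)}"
proof (rule set_eqI)
  fix s :: frame
  obtain i j where "s = (i, j)"
    by fastforce
  then show "s \<in> frames \<longleftrightarrow>
      s \<in> {(Seg, Side), (Seg, Rot), (Side, Seg), (Side, Rot), (Rot, Seg), (Rot, Side)}"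
    by (cases i; cases j) (simp_all add: frames_def)
qed

(* A partial Petrial replaces lg by sg \<circ> lg. *)
fun frame_op :: "rop \<Rightarrow> frame \<Rightarrow> frame" where
  "frame_op D (i, j) = (j, i)"
| "frame_op T (i, j) = (i, third i j)"

lemma frame_op_frames: "s \<in> frames \<Longrightarrow> frame_op w s \<in> frames"
  by (cases w; cases s) (auto simp: frames_def dest: third_neq)

definition reframe :: "rop list \<Rightarrow> 'a set set \<Rightarrow> 'a framing \<Rightarrow> 'a framing" where
  "reframe ws A c e = (if e \<in> A then foldr frame_op ws (c e) else c e)"

lemma reframe_Nil [simp]: "reframe [] A c = c"
  by (simp add: reframe_def fun_eq_iff)

lemma reframe_Cons: "reframe (w # ws) A c = reframe [w] A (reframe ws A c)"
  by (simp add: reframe_def fun_eq_iff)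

lemma fold_reframe_parts:
  assumes "distinct ks" "e \<in> edges G"
  shows "fold (\<lambda>(ws, A). reframe ws A) (map (\<lambda>k. (W k, part G p k)) ks) c e
    = (if p e \<in> set ks then foldr frame_op (W (p e)) (c e) else c e)"
  using assms by (induction ks arbitrary: c) (auto simp: reframe_def part_def)

definition frame_sg :: "'a ribbon \<Rightarrow> 'a framing \<Rightarrow> 'a \<Rightarrow> 'a" where
  "frame_sg G c f = rect_act G (fst (c (edge_of G f))) f"

definition frame_lg :: "'a ribbon \<Rightarrow> 'a framing \<Rightarrow> 'a \<Rightarrow> 'a" where
  "frame_lg G c f = rect_act G (snd (c (edge_of G f))) f"

definition framed :: "'a ribbon \<Rightarrow> 'a ribbon \<Rightarrow> 'a framing \<Rightarrow> bool" where
  "framed H G c \<longleftrightarrow> flags H = flags G \<and> iso H = iso G \<and> nu H = nu G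
     \<and> (\<forall>e\<in>edges G. c e \<in> frames)
     \<and> (\<forall>f\<in>flags G. sg H f = frame_sg G c f \<and> lg H f = frame_lg G c f)"

lemma framed_cong:
  assumes "framed H G c" "\<And>e. e \<in> edges G \<Longrightarrow> c e = c' e"
  shows "framed H G c'"
proof -
  have "c (edge_of G f) = c' (edge_of G f)" if "f \<in> flags G" for f
    using assms(2) edge_of_in_edges[OF that] .
  then show ?thesis
    using assms by (auto simp: framed_def frame_sg_def frame_lg_def)
qed

definition frame_vrel :: "'a ribbon \<Rightarrow> 'a framing \<Rightarrow> ('a \<times> 'a) set" where
  "frame_vrel G c = arcs (flags G) (frame_sg G c) \<union> arcs (flags G) (nu G)"

definition frame_nv :: "'a ribbon \<Rightarrow> 'a framing \<Rightarrow> nat" where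
  "frame_nv G c = iso G + card (flags G // (frame_vrel G c)\<^sup>*)"

lemma vertices_eq_quotient: "vertices G = flags G // (arcs (flags G) (sg G) \<union> arcs (flags G) (nu G))\<^sup>*"
  by (auto simp: vertices_def vrel_def quotient_def arcs_def)

lemma nv_framed: "framed H G c \<Longrightarrow> nv H = frame_nv G c"
  unfolding nv_def frame_nv_def frame_vrel_def vertices_eq_quotient framed_def
  by (metis (no_types, lifting) arcs_cong)

lemma frame_nv_cong:
  assumes "\<And>e. e \<in> edges G \<Longrightarrow> c e = c' e"
  shows "frame_nv G c = frame_nv G c'"
proof -
  have "arcs (flags G) (frame_sg G c) = arcs (flags G) (frame_sg G c')"
    by (rule arcs_cong) (simp add: frame_sg_def assms edge_of_in_edges)
  then show ?thesis
    by (simp add: frame_nv_def frame_vrel_def)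
qed

definition frame_poly :: "'a ribbon \<Rightarrow> frame set \<Rightarrow> int poly" where
  "frame_poly G S = (\<Sum>c\<in>PiE (edges G) (\<lambda>_. S). monom 1 (frame_nv G c))"

(* The orbits of the frame (Seg, Side) under the groups generated by delta, by tau delta tau and by
   delta tau; its orbit under the whole group is frames. *)
definition frames_d :: "frame set" where
  "frames_d = {(Seg, Side), (Side, Seg)}"

definition frames_tdt :: "frame set" where
  "frames_tdt = {(Seg, Side), (Rot, Side)}"

definition frames_dt :: "frame set" where
  "frames_dt = {(Seg, Side), (Side, Rot), (Rot, Seg)}"

definition dt_words :: "rop list list" where
  "dt_words = [[], [T, D], [D, T]]"

definition dT_words :: "rop list list" where
  "dT_words = [[], [D], [T], [T, D], [D, T], [T, D, T]]"

lemma length_dt_words [simp]: "length dt_words = 3"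
  by (simp add: dt_words_def)

lemma length_dT_words [simp]: "length dT_words = 6"
  by (simp add: dT_words_def)

lemma bij_frames_d:
  "s \<in> frames_d \<Longrightarrow> bij_betw (\<lambda>b. if b then foldr frame_op [D] s else s) UNIV frames_d"
  by (auto simp: frames_d_def bij_betw_def inj_on_def UNIV_bool)

lemma bij_frames_tdt:
  "s \<in> frames_tdt \<Longrightarrow> bij_betw (\<lambda>b. if b then foldr frame_op [T, D, T] s else s) UNIV frames_tdt"
  by (auto simp: frames_tdt_def bij_betw_def inj_on_def UNIV_bool)

lemma bij_dt_words:
  "s \<in> frames_dt \<Longrightarrow> bij_betw (\<lambda>k. foldr frame_op (dt_words ! k) s) {..<length dt_words} frames_dt"
  unfolding frames_dt_def dt_words_def
  by (elim insertE emptyE) (simp_all add: bij_betw_def lessThan_Suc insert_commute)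

lemma bij_dT_words:
  "s \<in> frames \<Longrightarrow> bij_betw (\<lambda>k. foldr frame_op (dT_words ! k) s) {..<length dT_words} frames"
  unfolding frames_eq dT_words_def
  by (elim insertE emptyE) (simp_all add: bij_betw_def lessThan_Suc insert_commute)

lemma G_dt_eq: "G_dt G p = apply_seq (map (\<lambda>k. (dt_words ! k, part G p k)) [0..<length dt_words]) G"
  by (simp add: G_dt_def dt_words_def upt_rec eval_nat_numeral)

lemma G_dT_eq: "G_dT G p = apply_seq (map (\<lambda>k. (dT_words ! k, part G p k)) [0..<length dT_words]) G"
  by (simp add: G_dT_def dT_words_def upt_rec eval_nat_numeral)

section \<open>Ribbon graphs and their frames\<close>

context
  fixes G :: "'a ribbon"
  assumes G: "ribbon_graph G"
begin

lemma flags_closed [simp]: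
  assumes "f \<in> flags G"
  shows "sg G f \<in> flags G" "lg G f \<in> flags G" "nu G f \<in> flags G"
    and "sg G (sg G f) = f" "lg G (lg G f) = f" "lg G (sg G f) = sg G (lg G f)"
  using G assms unfolding ribbon_graph_def fpf_involution_def by auto

lemma rect_act_in_flags [simp]: "f \<in> flags G \<Longrightarrow> rect_act G k f \<in> flags G"
  by (cases k) simp_all

lemma rect_act_involutive [simp]: "f \<in> flags G \<Longrightarrow> rect_act G k (rect_act G k f) = f"
  by (cases k) simp_all

lemma rect_act_neq:
  assumes "f \<in> flags G"
  shows "rect_act G k f \<noteq> f"
proof (cases k)
  case Rot
  have "sg G f \<noteq> lg G f"
    using G assms by (simp add: ribbon_graph_def)
  then show ?thesis
    using Rot assms by (metis rect_act.simps(3) flags_closed(2,4))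
qed (use G assms in \<open>simp_all add: ribbon_graph_def fpf_involution_def\<close>)

lemma rect_act_rect_act:
  "f \<in> flags G \<Longrightarrow> i \<noteq> j \<Longrightarrow> rect_act G i (rect_act G j f) = rect_act G (third i j) f"
  by (cases i; cases j) simp_all

lemma edge_of_rect_act: "f \<in> flags G \<Longrightarrow> edge_of G (rect_act G k f) = edge_of G f"
  by (cases k) (auto simp: edge_of_def)

lemma finite_edges: "finite (edges G)"
  using G by (simp add: edges_def ribbon_graph_def)

lemma framed_base: "framed G G (\<lambda>_. (Seg, Side))"
  by (simp add: framed_def frames_def frame_sg_def frame_lg_def)

lemma framed_sg_lg:
  assumes "framed H G c" "f \<in> flags G"
  obtains i j where "c (edge_of G f) = (i, j)" "i \<noteq> j"
    "sg H f = rect_act G i f" "lg H f = rect_act G j f"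
    "sg H (lg H f) = rect_act G (third i j) f"
proof -
  obtain i j where ij: "c (edge_of G f) = (i, j)"
    by fastforce
  then have "i \<noteq> j"
    using assms edge_of_in_edges by (fastforce simp: framed_def frames_def)
  moreover have "sg H f = rect_act G i f" "lg H f = rect_act G j f"
    using assms ij by (simp_all add: framed_def frame_sg_def frame_lg_def)
  moreover have "sg H (rect_act G j f) = rect_act G i (rect_act G j f)"
    using assms ij rect_act_in_flags[OF \<open>f \<in> flags G\<close>, of j]
    by (simp add: framed_def frame_sg_def edge_of_rect_act)
  ultimately show ?thesis
    using that ij rect_act_rect_act[OF \<open>f \<in> flags G\<close>] by metis
qed

lemma framed_edge_of:
  assumes "framed H G c" "f \<in> flags G"
  shows "edge_of H f = edge_of G f"
proof -
  obtain i j where "i \<noteq> j" "sg H f = rect_act G i f" "lg H f = rect_act G j f"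
    "sg H (lg H f) = rect_act G (third i j) f"
    using framed_sg_lg[OF assms] .
  then have "edge_of H f = insert f ((\<lambda>k. rect_act G k f) ` {i, j, third i j})"
    by (auto simp: edge_of_def)
  then show ?thesis
    by (simp add: insert_third[OF \<open>i \<noteq> j\<close>] edge_of_eq_range)
qed

lemma edges_framed: "framed H G c \<Longrightarrow> edges H = edges G"
  using framed_edge_of unfolding edges_def framed_def by (metis image_cong)

lemma framed_apply_op:
  assumes "framed H G c"
  shows "framed (apply_op w A H) G (reframe [w] A c)"
proof -
  have "\<forall>e\<in>edges G. reframe [w] A c e \<in> frames"
    using assms frame_op_frames by (auto simp: framed_def reframe_def)
  moreover have "sg (apply_op w A H) f = frame_sg G (reframe [w] A c) f
      \<and> lg (apply_op w A H) f = frame_lg G (reframe [w] A c) f" if f: "f \<in> flags G" for f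
  proof -
    obtain i j where "c (edge_of G f) = (i, j)" "sg H f = rect_act G i f" "lg H f = rect_act G j f"
      "sg H (lg H f) = rect_act G (third i j) f"
      using framed_sg_lg[OF assms f] by metis
    moreover have "edge_of H f = edge_of G f"
      using framed_edge_of[OF assms f] .
    ultimately show ?thesis
      by (cases w) (simp_all add: pdual_def ppetrial_def reframe_def frame_sg_def frame_lg_def)
  qed
  ultimately show ?thesis
    using assms by (cases w) (simp_all add: framed_def pdual_def ppetrial_def)
qed

lemma framed_apply_word:
  assumes "framed H G c"
  shows "framed (apply_word ws A H) G (reframe ws A c)"
  using assms
proof (induction ws)
  case (Cons w ws)
  then show ?case
    unfolding reframe_Cons[of w ws] by (simp add: framed_apply_op)
qed simp

lemma framed_apply_seq:
  "framed H G c \<Longrightarrow> framed (apply_seq L H) G (fold (\<lambda>(ws, A). reframe ws A) L c)"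
  by (induction L arbitrary: H c) (auto simp: framed_apply_word)

lemma framed_apply_parts:
  assumes "framed H G c" "p \<in> PiE (edges G) (\<lambda>_. {..<length ws})"
  shows "framed (apply_seq (map (\<lambda>k. (ws ! k, part H p k)) [0..<length ws]) H) G
    (\<lambda>e. foldr frame_op (ws ! p e) (c e))"
proof -
  have "part H p = part G p"
    using edges_framed[OF assms(1)] by (simp add: part_def fun_eq_iff)
  then have "framed (apply_seq (map (\<lambda>k. (ws ! k, part H p k)) [0..<length ws]) H) G
      (fold (\<lambda>(ws, A). reframe ws A) (map (\<lambda>k. (ws ! k, part G p k)) [0..<length ws]) c)"
    using framed_apply_seq[OF assms(1)] by simp
  then show ?thesis
    by (rule framed_cong)
      (use assms(2) in \<open>auto simp: fold_reframe_parts[where W = "\<lambda>k. ws ! k"]\<close>)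
qed

lemma sum_Pow_framed:
  assumes "framed H G c" "\<And>e. e \<in> edges G \<Longrightarrow> c e \<in> S"
    and "\<And>s. s \<in> S \<Longrightarrow> bij_betw (\<lambda>b. if b then foldr frame_op ws s else s) UNIV S"
  shows "(\<Sum>A\<in>Pow (edges H). monom 1 (nv (apply_word ws A H))) = frame_poly G S"
proof -
  have "nv (apply_word ws A H) = frame_nv G (\<lambda>e. if e \<in> A then foldr frame_op ws (c e) else c e)" for A
    using nv_framed[OF framed_apply_word[OF assms(1)]] by (simp add: reframe_def[abs_def])
  then have "(\<Sum>A\<in>Pow (edges H). monom 1 (nv (apply_word ws A H)))
      = (\<Sum>A\<in>Pow (edges G).
          monom 1 (frame_nv G (\<lambda>e. if e \<in> A then foldr frame_op ws (c e) else c e)))"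
    by (simp add: edges_framed[OF assms(1)])
  also have "\<dots> = frame_poly G S"
    unfolding frame_poly_def
    by (rule sum_Pow_pointwise_bij[where \<phi> = "\<lambda>e b. if b then foldr frame_op ws (c e) else c e"
          and g = "\<lambda>c. monom 1 (frame_nv G c)"])
      (use assms(2,3) in \<open>auto intro!: arg_cong[where f = "monom 1"] frame_nv_cong\<close>)
  finally show ?thesis .
qed

lemma sum_partitions_framed:
  assumes "framed H G c" "\<And>e. e \<in> edges G \<Longrightarrow> c e \<in> S"
    and "\<And>s. s \<in> S \<Longrightarrow> bij_betw (\<lambda>k. foldr frame_op (ws ! k) s) {..<length ws} S"
  shows "(\<Sum>p\<in>opartitions H (length ws).
      monom 1 (nv (apply_seq (map (\<lambda>k. (ws ! k, part H p k)) [0..<length ws]) H))) = frame_poly G S"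
proof -
  have "opartitions H (length ws) = PiE (edges G) (\<lambda>_. {..<length ws})"
    using edges_framed[OF assms(1)] by (simp add: opartitions_def)
  have "nv (apply_seq (map (\<lambda>k. (ws ! k, part H p k)) [0..<length ws]) H)
      = frame_nv G (\<lambda>e. foldr frame_op (ws ! p e) (c e))"
    if "p \<in> PiE (edges G) (\<lambda>_. {..<length ws})" for p
    using nv_framed framed_apply_parts[OF assms(1) that] by blast
  then have "(\<Sum>p\<in>opartitions H (length ws).
      monom 1 (nv (apply_seq (map (\<lambda>k. (ws ! k, part H p k)) [0..<length ws]) H)))
      = (\<Sum>p\<in>PiE (edges G) (\<lambda>_. {..<length ws}).
          monom 1 (frame_nv G (\<lambda>e. foldr frame_op (ws ! p e) (c e))))"
    using \<open>opartitions H (length ws) = _\<close> by (simp cong: sum.cong)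
  also have "\<dots> = frame_poly G S"
    unfolding frame_poly_def
    by (rule sum_PiE_pointwise_bij[where \<phi> = "\<lambda>e k. foldr frame_op (ws ! k) (c e)"
          and g = "\<lambda>c. monom 1 (frame_nv G c)"])
      (use assms(2,3) in \<open>auto intro!: arg_cong[where f = "monom 1"] frame_nv_cong\<close>)
  finally show ?thesis .
qed

lemma P_d_framed:
  assumes "framed H G c" "\<And>e. e \<in> edges G \<Longrightarrow> c e \<in> frames_d"
  shows "P_d H = frame_poly G frames_d"
  unfolding P_d_def using assms by (rule sum_Pow_framed) (auto simp: bij_frames_d)

lemma P_tdt_framed:
  assumes "framed H G c" "\<And>e. e \<in> edges G \<Longrightarrow> c e \<in> frames_tdt"
  shows "P_tdt H = frame_poly G frames_tdt"
  unfolding P_tdt_def using assms by (rule sum_Pow_framed) (auto simp: bij_frames_tdt)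

lemma P_dt_framed:
  assumes "framed H G c" "\<And>e. e \<in> edges G \<Longrightarrow> c e \<in> frames_dt"
  shows "P_dt H = frame_poly G frames_dt"
  using sum_partitions_framed[OF assms bij_dt_words]
  by (simp add: P_dt_def G_dt_eq)

lemma P_dT_framed:
  assumes "framed H G c"
  shows "P_dT H = frame_poly G frames"
  using sum_partitions_framed[OF assms _ bij_dT_words] assms
  by (simp add: P_dT_def G_dT_eq framed_def)

lemma P_d_orbit:
  assumes "H \<in> Orb_d G"
  shows "P_d H = frame_poly G frames_d"
proof -
  obtain A where H: "H = apply_word [D] A G"
    using assms by (auto simp: Orb_d_def)
  have "framed H G (reframe [D] A (\<lambda>_. (Seg, Side)))"
    unfolding H by (rule framed_apply_word[OF framed_base])
  then show ?thesis
    by (rule P_d_framed) (simp add: reframe_def frames_d_def)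
qed

lemma P_tdt_orbit:
  assumes "H \<in> Orb_tdt G"
  shows "P_tdt H = frame_poly G frames_tdt"
proof -
  obtain A where H: "H = apply_word [T, D, T] A G"
    using assms by (auto simp: Orb_tdt_def)
  have "framed H G (reframe [T, D, T] A (\<lambda>_. (Seg, Side)))"
    unfolding H by (rule framed_apply_word[OF framed_base])
  then show ?thesis
    by (rule P_tdt_framed) (simp add: reframe_def frames_tdt_def)
qed

lemma P_dt_orbit:
  assumes "H \<in> Orb_dt G"
  shows "P_dt H = frame_poly G frames_dt"
proof -
  obtain p where p: "p \<in> PiE (edges G) (\<lambda>_. {..<length dt_words})" and "H = G_dt G p"
    using assms by (auto simp: Orb_dt_def opartitions_def)
  then have "framed H G (\<lambda>e. foldr frame_op (dt_words ! p e) (Seg, Side))"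
    using framed_apply_parts[OF framed_base p] by (simp add: G_dt_eq)
  moreover have "(Seg, Side) \<in> frames_dt"
    by (simp add: frames_dt_def)
  ultimately show ?thesis
    using p bij_betwE[OF bij_dt_words] by (auto intro!: P_dt_framed)
qed

lemma P_dT_orbit: "H \<in> Orb_dT G \<Longrightarrow> P_dT H = frame_poly G frames"
  unfolding Orb_dT_def opartitions_def
  using framed_apply_parts[OF framed_base, of _ dT_words] P_dT_framed
  by (auto simp: G_dT_eq)

lemma vertex_polys_at_one:
  "poly (P_d G) 1 = 2 ^ ne G" "poly (P_tdt G) 1 = 2 ^ ne G"
  "poly (P_dt G) 1 = 3 ^ ne G" "poly (P_dT G) 1 = 6 ^ ne G"
  using finite_edges
  by (simp_all add: P_d_def P_tdt_def P_dt_def P_dT_def poly_sum_monom_one card_Pow ne_def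
      opartitions_def card_PiE)

lemma frame_sg_fpf_involution: "fpf_involution (flags G) (frame_sg G c)"
  unfolding fpf_involution_def frame_sg_def
  by (simp add: edge_of_rect_act rect_act_neq)

lemma nu_fpf_involution: "fpf_involution (flags G) (nu G)"
  using G by (simp add: ribbon_graph_def)

lemma sym_frame_vrel: "sym (frame_vrel G c)"
  unfolding frame_vrel_def
  using sym_arcs[OF frame_sg_fpf_involution] sym_arcs[OF nu_fpf_involution] by (rule sym_Un)

lemma frame_nv_pos: "connected_rg G \<Longrightarrow> 1 \<le> frame_nv G c"
  using G unfolding connected_rg_def frame_nv_def ribbon_graph_def
  by (auto simp: Suc_le_eq card_gt_0_iff quotient_eq_image)

lemma exists_edge_across_vertices:
  assumes "connected_rg G" "1 < frame_nv G c"
  shows "iso G = 0" "\<exists>a\<in>flags G. \<exists>k. (a, rect_act G k a) \<notin> (frame_vrel G c)\<^sup>*"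
proof -
  define R where "R = (frame_vrel G c)\<^sup>*"
  have "flags G \<noteq> {}"
    using assms by (auto simp: connected_rg_def frame_nv_def)
  then show "iso G = 0"
    using assms(1) by (simp add: connected_rg_def)
  show "\<exists>a\<in>flags G. \<exists>k. (a, rect_act G k a) \<notin> R"
  proof (rule ccontr)
    assume "\<not> ?thesis"
    then have "(f, rect_act G Seg f) \<in> R" "(f, rect_act G Side f) \<in> R" if "f \<in> flags G" for f
      using that by blast+
    moreover have "(f, nu G f) \<in> R" if "f \<in> flags G" for f
      using that by (auto simp: R_def frame_vrel_def)
    ultimately have "allrel G \<subseteq> R"
      unfolding allrel_def vrel_def by auto
    then have "(allrel G)\<^sup>* \<subseteq> R"
      unfolding R_def by (rule rtrancl_subset_rtrancl)
    obtain f0 where "f0 \<in> flags G"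
      using \<open>flags G \<noteq> {}\<close> by blast
    have conn: "(f0, f) \<in> R" if "f \<in> flags G" for f
      using assms(1) \<open>(allrel G)\<^sup>* \<subseteq> R\<close> \<open>flags G \<noteq> {}\<close> \<open>f0 \<in> flags G\<close> that
      unfolding connected_rg_def by blast
    have "equiv UNIV R"
      unfolding R_def by (rule equiv_rtrancl[OF sym_frame_vrel])
    then have "R `` {f} = R `` {f0}" if "f \<in> flags G" for f
      using equiv_class_eq[OF \<open>equiv UNIV R\<close> conn[OF that]] by simp
    then have "flags G // R = {R `` {f0}}"
      unfolding quotient_eq_image using \<open>f0 \<in> flags G\<close> by blast
    then show False
      using assms \<open>iso G = 0\<close> by (simp add: frame_nv_def R_def)
  qed
qed

lemma mem_edge_of_iff:
  assumes "a \<in> flags G"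
  shows "x \<in> edge_of G a \<longleftrightarrow> x \<in> flags G \<and> edge_of G x = edge_of G a"
proof
  assume "x \<in> edge_of G a"
  then obtain m where "x = a \<or> x = rect_act G m a"
    by (auto simp: edge_of_eq_range)
  then show "x \<in> flags G \<and> edge_of G x = edge_of G a"
    using assms edge_of_rect_act by auto
next
  assume "x \<in> flags G \<and> edge_of G x = edge_of G a"
  then show "x \<in> edge_of G a"
    by (metis insertI1 edge_of_eq_range)
qed

lemma edge_of_four_corners:
  assumes "a \<in> flags G" "i \<noteq> k"
  shows "edge_of G a = {a, rect_act G i a, rect_act G k a, rect_act G i (rect_act G k a)}"
proof -
  have "edge_of G a = insert a ((\<lambda>m. rect_act G m a) ` {i, k, third i k})"
    by (simp only: insert_third[OF assms(2)] edge_of_eq_range)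
  then show ?thesis
    by (simp add: rect_act_rect_act[OF assms])
qed

lemma frame_sg_fun_upd_edge:
  assumes "a \<in> flags G"
  shows "frame_sg G (c(edge_of G a := s)) ` edge_of G a \<subseteq> edge_of G a"
    and "\<forall>x\<in>flags G - edge_of G a. frame_sg G (c(edge_of G a := s)) x = frame_sg G c x"
proof
  fix x assume "x \<in> frame_sg G (c(edge_of G a := s)) ` edge_of G a"
  then obtain z where "z \<in> edge_of G a" "x = rect_act G (fst s) z"
    using mem_edge_of_iff[OF assms] by (auto simp: frame_sg_def)
  moreover have "rect_act G (fst s) z \<in> edge_of G z"
    by (simp add: edge_of_eq_range)
  ultimately show "x \<in> edge_of G a"
    using mem_edge_of_iff[OF assms] by auto
next
  show "\<forall>x\<in>flags G - edge_of G a. frame_sg G (c(edge_of G a := s)) x = frame_sg G c x"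
    using mem_edge_of_iff[OF assms] by (auto simp: frame_sg_def)
qed

lemma frame_nv_merge_vertices:
  assumes "a \<in> flags G" and apart: "(a, rect_act G k a) \<notin> (frame_vrel G c)\<^sup>*"
    and "fst s \<noteq> fst (c (edge_of G a))"
  shows "Suc (frame_nv G (c(edge_of G a := s))) = frame_nv G c"
proof -
  define \<sigma> where "\<sigma> = frame_sg G c"
  define \<sigma>' where "\<sigma>' = frame_sg G (c(edge_of G a := s))"
  define y where "y = rect_act G k a"
  define i where "i = fst (c (edge_of G a))"
  have "y \<in> flags G" "edge_of G y = edge_of G a"
    using \<open>a \<in> flags G\<close> by (simp_all add: y_def edge_of_rect_act)
  then have \<sigma>: "\<sigma> a = rect_act G i a" "\<sigma> y = rect_act G i y"
    by (simp_all add: \<sigma>_def i_def frame_sg_def)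
  then have "k \<noteq> i"
    using apart \<open>a \<in> flags G\<close> by (auto simp: frame_vrel_def \<sigma>_def)
  then have B: "edge_of G a = {a, \<sigma> a, y, \<sigma> y}"
    using edge_of_four_corners[OF \<open>a \<in> flags G\<close> \<open>k \<noteq> i\<close>[symmetric]] \<sigma> by (simp add: y_def)
  have "fst s \<in> {k, third i k}"
    using insert_third[OF \<open>k \<noteq> i\<close>[symmetric]] assms(3) by (auto simp: i_def)
  then have \<sigma>'_a: "\<sigma>' a \<in> {y, \<sigma> y}"
    using \<sigma> rect_act_rect_act[OF \<open>a \<in> flags G\<close> \<open>k \<noteq> i\<close>[symmetric]]
    by (auto simp: \<sigma>'_def frame_sg_def y_def)
  have "\<sigma>' ` edge_of G a \<subseteq> edge_of G a" "\<forall>x\<in>flags G - edge_of G a. \<sigma>' x = \<sigma> x"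
    unfolding \<sigma>'_def \<sigma>_def by (rule frame_sg_fun_upd_edge[OF \<open>a \<in> flags G\<close>])+
  note \<sigma>'_B = this[unfolded B]
  have "finite (flags G)"
    using G unfolding ribbon_graph_def by blast
  moreover have "(a, y) \<notin> (arcs (flags G) \<sigma> \<union> arcs (flags G) (nu G))\<^sup>*"
    using apart by (simp add: frame_vrel_def \<sigma>_def y_def)
  ultimately have "Suc (card (flags G // (arcs (flags G) \<sigma>' \<union> arcs (flags G) (nu G))\<^sup>*))
      = card (flags G // (arcs (flags G) \<sigma> \<union> arcs (flags G) (nu G))\<^sup>*)"
    unfolding \<sigma>_def \<sigma>'_def
    by (rule card_quotient_reconnect[OF _ frame_sg_fpf_involution frame_sg_fpf_involution
          nu_fpf_involution \<open>a \<in> flags G\<close> \<open>y \<in> flags G\<close> _ refl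
          \<sigma>'_a[unfolded \<sigma>_def \<sigma>'_def] \<sigma>'_B[unfolded \<sigma>_def \<sigma>'_def]])
  then show ?thesis
    by (simp add: frame_nv_def frame_vrel_def \<sigma>_def \<sigma>'_def)
qed

lemma frame_poly_interpolating:
  assumes "connected_rg G" "S \<noteq> {}" and S: "\<And>s. s \<in> S \<Longrightarrow> \<exists>s'\<in>S. fst s' \<noteq> fst s"
  shows "mindeg1_interpolating (frame_poly G S)"
  unfolding frame_poly_def
proof (rule mindeg1_interpolating_sum_monom)
  show "finite (PiE (edges G) (\<lambda>_. S))"
    using finite_edges finite_frame_set by (rule finite_PiE)
  show "PiE (edges G) (\<lambda>_. S) \<noteq> {}"
    using \<open>S \<noteq> {}\<close> by (simp add: PiE_eq_empty_iff)
  show "1 \<le> frame_nv G c" for c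
    using frame_nv_pos[OF \<open>connected_rg G\<close>] .
next
  fix c assume c: "c \<in> PiE (edges G) (\<lambda>_. S)" and "1 < frame_nv G c"
  then obtain a k where a: "a \<in> flags G" "(a, rect_act G k a) \<notin> (frame_vrel G c)\<^sup>*"
    using exists_edge_across_vertices[OF \<open>connected_rg G\<close>] by blast
  define e where "e = edge_of G a"
  then have "e \<in> edges G"
    using a by (simp add: edge_of_in_edges)
  then have "c e \<in> S"
    using c by blast
  then obtain s where "s \<in> S" "fst s \<noteq> fst (c e)"
    using S by blast
  then have "c(e := s) \<in> PiE (edges G) (\<lambda>_. S)"
    using c \<open>e \<in> edges G\<close> by (auto simp: PiE_iff extensional_def)
  moreover have "Suc (frame_nv G (c(e := s))) = frame_nv G c"
    unfolding e_def by (rule frame_nv_merge_vertices[OF a]) (use \<open>fst s \<noteq> fst (c e)\<close> e_def in simp)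
  ultimately show "\<exists>c'\<in>PiE (edges G) (\<lambda>_. S). frame_nv G c' = frame_nv G c - 1"
    by (metis diff_Suc_1)
qed

end

theorem mainTheorem5:
  fixes G :: "'a ribbon"
  assumes "ribbon_graph G" and "connected_rg G"
  shows "poly (P_d G) 1 = 2 ^ ne G \<and> poly (P_tdt G) 1 = 2 ^ ne G
       \<and> poly (P_dt G) 1 = 3 ^ ne G \<and> poly (P_dT G) 1 = 6 ^ ne G
       \<and> (\<forall>H\<in>Orb_d G. P_d G = P_d H) \<and> (\<forall>H\<in>Orb_dt G. P_dt G = P_dt H)
       \<and> (\<forall>H\<in>Orb_tdt G. P_tdt G = P_tdt H) \<and> (\<forall>H\<in>Orb_dT G. P_dT G = P_dT H)
       \<and> mindeg1_interpolating (P_d G) \<and> mindeg1_interpolating (P_dt G)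
       \<and> mindeg1_interpolating (P_tdt G) \<and> mindeg1_interpolating (P_dT G)"
proof -
  note G = assms(1) and base = framed_base[OF assms(1)]
  have "P_d G = frame_poly G frames_d"
    by (rule P_d_framed[OF G base]) (simp add: frames_d_def)
  moreover have "P_tdt G = frame_poly G frames_tdt"
    by (rule P_tdt_framed[OF G base]) (simp add: frames_tdt_def)
  moreover have "P_dt G = frame_poly G frames_dt"
    by (rule P_dt_framed[OF G base]) (simp add: frames_dt_def)
  moreover have "P_dT G = frame_poly G frames"
    by (rule P_dT_framed[OF G base])
  moreover have "mindeg1_interpolating (frame_poly G S)"
    if "S \<in> {frames_d, frames_tdt, frames_dt, frames}" for S
    using that by (intro frame_poly_interpolating[OF G assms(2)])
      (auto simp: frames_d_def frames_tdt_def frames_dt_def frames_eq)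
  ultimately show ?thesis
    using vertex_polys_at_one[OF G] P_d_orbit[OF G] P_tdt_orbit[OF G] P_dt_orbit[OF G] P_dT_orbit[OF G]
    by simp
qed

end
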